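(* Let $\mathcal{S}$ be a subset of $\mathbb{P}^2(\mathbb{F}_q)$ with $|\mathcal{S}|=q+2$, and suppose there is some $P\in\mathcal{S}$ such that no line through $P$ contains at least three points of $\mathcal{S}$. Then after a suitable change of projective coordinates, $\mathcal{S}=\mathcal{S}_f$ for some $f(X)\in\mathbb{F}_q[X]$. Moreover, if there are two such points $P\in\mathcal{S}$, then after a suitable change of coordinates $\mathcal{S}=\mathcal{S}_f$ for some $f(X)\in\mathbb{F}_q[X]$ which permutes $\mathbb{F}_q$.
   Context: $q$ is a prime power. For $f(X)\in\mathbb{F}_q[X]$, $\mathcal{S}_f:=\{(c:f(c):1):c\in\mathbb{F}_q\}\cup\{(1:0:0),(0:1:0)\}\subseteq\mathbb{P}^2(\mathbb{F}_q)$. A polynomial permutes $\mathbb{F}_q$ if the map $c\mapsto f(c)$ is a bijection $\mathbb{F}_q\to\mathbb{F}_q$. *)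

theory Defs
  imports "HOL-Analysis.Analysis" "HOL-Computational_Algebra.Polynomial"
begin

definition pclass :: "'a::field ^ 3 \<Rightarrow> ('a ^ 3) set" where
  "pclass v = {c *s v | c. c \<noteq> 0}"

definition P2 :: "('a::field ^ 3) set set" where
  "P2 = pclass ` {v. v \<noteq> 0}"

definition pline :: "'a::field ^ 3 \<Rightarrow> ('a ^ 3) set set" where
  "pline l = {pclass v | v. v \<noteq> 0 \<and> (\<Sum>i\<in>UNIV. l $ i * v $ i) = 0}"

definition is_line :: "('a::field ^ 3) set set \<Rightarrow> bool" where
  "is_line L \<longleftrightarrow> (\<exists>l. l \<noteq> 0 \<and> L = pline l)"

definition pmap :: "'a::field ^ 3 ^ 3 \<Rightarrow> ('a ^ 3) set set \<Rightarrow> ('a ^ 3) set set" where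
  "pmap A S = (\<lambda>P. (\<lambda>v. A *v v) ` P) ` S"

definition S_f :: "'a::field poly \<Rightarrow> ('a ^ 3) set set" where
  "S_f f = {pclass (vector [c, poly f c, 1]) | c. True}
           \<union> {pclass (vector [1, 0, 0]), pclass (vector [0, 1, 0])}"

definition good_point :: "('a::field ^ 3) set set \<Rightarrow> ('a ^ 3) set \<Rightarrow> bool" where
  "good_point S P \<longleftrightarrow> P \<in> S \<and> (\<forall>L. is_line L \<and> P \<in> L \<longrightarrow> card (L \<inter> S) < 3)"

end

theory Submission
  imports Defs
begin

text \<open>Move the good point P to (0:1:0) and a second point Q of S to (1:0:0). The line at
  infinity passes through P and already contains Q, so every other point of S is affine.
  Each of the q vertical lines through P carries at most one of the q remaining points, so
  they form the graph of a function g, which over a finite field is a polynomial by Lagrange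
  interpolation. If Q is good as well, the horizontal lines through Q carry at most one point
  each, so g is injective and hence a permutation.\<close>

lemma pclass_self: "v \<in> pclass v"
  unfolding pclass_def by (auto intro: exI[of _ 1])

lemma pclass_smult:
  assumes "c \<noteq> 0"
  shows "pclass (c *s v) = pclass v"
proof (intro equalityI subsetI)
  fix x
  assume "x \<in> pclass (c *s v)"
  then obtain d where "d \<noteq> 0" "x = d *s (c *s v)"
    unfolding pclass_def by auto
  then have "x = (d * c) *s v" "d * c \<noteq> 0"
    using assms by simp_all
  then show "x \<in> pclass v"
    unfolding pclass_def by blast
next
  fix x
  assume "x \<in> pclass v"
  then obtain d where "d \<noteq> 0" "x = d *s v"
    unfolding pclass_def by auto
  then have "x = (d / c) *s (c *s v)" "d / c \<noteq> 0"
    using assms by simp_all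
  then show "x \<in> pclass (c *s v)"
    unfolding pclass_def by blast
qed

lemma pclass_eq_imp_smult: "pclass v = pclass w \<Longrightarrow> \<exists>c. c \<noteq> 0 \<and> w = c *s v"
  using pclass_self[of w] unfolding pclass_def by auto

lemma pclass_in_pline_iff:
  assumes "v \<noteq> 0"
  shows "pclass v \<in> pline l \<longleftrightarrow> (\<Sum>i\<in>UNIV. l $ i * v $ i) = 0"
proof
  assume "pclass v \<in> pline l"
  then obtain w where w: "pclass v = pclass w" "(\<Sum>i\<in>UNIV. l $ i * w $ i) = 0"
    unfolding pline_def by auto
  then obtain c where "v = c *s w" using pclass_eq_imp_smult by metis
  then show "(\<Sum>i\<in>UNIV. l $ i * v $ i) = 0"
    using w(2) by (simp add: algebra_simps flip: sum_distrib_left)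
qed (use assms in \<open>auto simp: pline_def\<close>)

lemma image_pclass: "(*v) A ` pclass v = pclass (A *v v)"
proof (intro equalityI subsetI)
  fix x
  assume "x \<in> pclass (A *v v)"
  then obtain c where "c \<noteq> 0" "x = A *v (c *s v)"
    unfolding pclass_def by (auto simp: vector_scalar_commute)
  then show "x \<in> (*v) A ` pclass v"
    unfolding pclass_def by blast
qed (auto simp: pclass_def vector_scalar_commute)

lemma vector_3_eq_0_iff: "(vector [a, b, c] :: 'a::zero ^ 3) = 0 \<longleftrightarrow> a = 0 \<and> b = 0 \<and> c = 0"
  by (auto simp: vec_eq_iff forall_3)

definition affine_point :: "'a::field \<Rightarrow> 'a \<Rightarrow> ('a ^ 3) set" where
  "affine_point a b = pclass (vector [a, b, 1])"

definition x_infinity :: "('a::field ^ 3) set" where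
  "x_infinity = pclass (vector [1, 0, 0])"

definition y_infinity :: "('a::field ^ 3) set" where
  "y_infinity = pclass (vector [0, 1, 0])"

lemma pclass_eq_affine_point:
  assumes "v $ 3 \<noteq> 0"
  shows "pclass v = affine_point (v $ 1 / v $ 3) (v $ 2 / v $ 3)"
proof -
  have "vector [v $ 1 / v $ 3, v $ 2 / v $ 3, 1] = (1 / v $ 3) *s v"
    using assms by (simp add: vec_eq_iff forall_3)
  then show ?thesis
    using assms by (simp add: affine_point_def pclass_smult)
qed

lemma affine_point_eq_iff: "affine_point a b = affine_point a' b' \<longleftrightarrow> a = a' \<and> b = b'"
proof
  assume "affine_point a b = affine_point a' b'"
  from pclass_eq_imp_smult[OF this[unfolded affine_point_def]]
  show "a = a' \<and> b = b'"
    by (auto simp: vec_eq_iff forall_3)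
qed simp

lemma affine_point_neq_point_at_infinity: "affine_point a b \<noteq> pclass (vector [x, y, 0])"
proof
  assume "affine_point a b = pclass (vector [x, y, 0])"
  from pclass_eq_imp_smult[OF this[unfolded affine_point_def]]
  show False
    by (auto simp: vec_eq_iff forall_3)
qed

lemma affine_point_neq_infinity [simp]:
  "affine_point a b \<noteq> x_infinity" "affine_point a b \<noteq> y_infinity"
  unfolding x_infinity_def y_infinity_def by (rule affine_point_neq_point_at_infinity)+

lemmas infinity_neq_affine_point [simp] = affine_point_neq_infinity[THEN not_sym]

lemma x_infinity_neq_y_infinity [simp]: "x_infinity \<noteq> y_infinity"
proof
  assume "x_infinity = y_infinity"
  from pclass_eq_imp_smult[OF this[unfolded x_infinity_def y_infinity_def]]
  show False
    by (auto simp: vec_eq_iff forall_3)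
qed

lemma affine_point_in_pline_iff:
  "affine_point a b \<in> pline l \<longleftrightarrow> l $ 1 * a + l $ 2 * b + l $ 3 = 0"
  unfolding affine_point_def by (simp add: pclass_in_pline_iff vector_3_eq_0_iff sum_3)

lemma x_infinity_in_pline_iff: "x_infinity \<in> pline l \<longleftrightarrow> l $ 1 = 0"
  unfolding x_infinity_def by (simp add: pclass_in_pline_iff vector_3_eq_0_iff sum_3)

lemma y_infinity_in_pline_iff: "y_infinity \<in> pline l \<longleftrightarrow> l $ 2 = 0"
  unfolding y_infinity_def by (simp add: pclass_in_pline_iff vector_3_eq_0_iff sum_3)

lemma P2_affine_or_at_infinity:
  assumes "X \<in> P2"
  obtains a b where "X = affine_point a b" | "X \<in> pline (vector [0, 0, 1])"
proof -
  obtain v where v: "v \<noteq> 0" "X = pclass v"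
    using assms unfolding P2_def by auto
  show thesis
  proof (cases "v $ 3 = 0")
    case True
    then show thesis
      using v that(2) by (simp add: pclass_in_pline_iff sum_3)
  next
    case False
    then show thesis
      using v that(1) pclass_eq_affine_point by blast
  qed
qed

definition graph_set :: "('a::field \<Rightarrow> 'a) \<Rightarrow> ('a ^ 3) set set" where
  "graph_set g = range (\<lambda>c. affine_point c (g c)) \<union> {x_infinity, y_infinity}"

lemma S_f_eq_graph_set: "S_f f = graph_set (poly f)"
  by (auto simp: S_f_def graph_set_def affine_point_def x_infinity_def y_infinity_def)

lemma ex_poly_eq_fun:
  fixes g :: "'a::{field,finite} \<Rightarrow> 'a"
  shows "\<exists>f. poly f = g"
proof -
  define f where
    "f = (\<Sum>a\<in>UNIV. smult (g a / (\<Prod>b\<in>UNIV - {a}. a - b)) (\<Prod>b\<in>UNIV - {a}. [:- b, 1:]))"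
  have "poly f x = g x" for x
  proof -
    have "poly f x = (\<Sum>a\<in>UNIV. g a / (\<Prod>b\<in>UNIV - {a}. a - b) * (\<Prod>b\<in>UNIV - {a}. x - b))"
      by (simp add: f_def poly_sum poly_prod)
    also have "\<dots> = g x / (\<Prod>b\<in>UNIV - {x}. x - b) * (\<Prod>b\<in>UNIV - {x}. x - b)"
      by (subst sum.remove[of _ x]) (auto intro!: sum.neutral simp: prod_zero_iff)
    also have "\<dots> = g x"
      by (simp add: prod_zero_iff)
    finally show ?thesis .
  qed
  then show ?thesis
    by blast
qed

lemma good_point_unique_on_line:
  assumes "good_point S P" "finite S" "l \<noteq> 0" "P \<in> pline l"
    and "X \<in> pline l \<inter> S" "Y \<in> pline l \<inter> S" "X \<noteq> P" "Y \<noteq> P"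
  shows "X = Y"
proof (rule ccontr)
  assume "X \<noteq> Y"
  have "card (pline l \<inter> S) < 3"
    using assms(1,3,4) unfolding good_point_def is_line_def by auto
  moreover have "{P, X, Y} \<subseteq> pline l \<inter> S"
    using assms good_point_def by auto
  then have "card {P, X, Y} \<le> card (pline l \<inter> S)"
    using assms(2) by (intro card_mono) auto
  ultimately show False
    using \<open>X \<noteq> Y\<close> assms(7,8) by auto
qed

lemma affine_point_if_good_y_infinity:
  assumes S: "S \<subseteq> P2" "finite S" and good: "good_point S y_infinity"
    and x_inf: "x_infinity \<in> S"
    and X: "X \<in> S" "X \<noteq> x_infinity" "X \<noteq> y_infinity"
  obtains a b where "X = affine_point a b"
proof -
  have "X \<in> P2"
    using S X(1) by blast
  then show thesis
  proof (cases rule: P2_affine_or_at_infinity)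
    case 2
    have "X = x_infinity"
      by (rule good_point_unique_on_line[OF good S(2), of "vector [0, 0, 1]"])
        (use X x_inf 2 in \<open>simp_all add: vector_3_eq_0_iff x_infinity_in_pline_iff
          y_infinity_in_pline_iff\<close>)
    with X(2) show thesis
      by blast
  qed (use that in blast)
qed

lemma vertical_unique_if_good_y_infinity:
  assumes good: "good_point S y_infinity" and "finite S"
    and "affine_point a b \<in> S" "affine_point a b' \<in> S"
  shows "b = b'"
proof -
  have "affine_point a b = affine_point a b'"
    by (rule good_point_unique_on_line[OF good \<open>finite S\<close>, of "vector [1, 0, - a]"])
      (use assms in \<open>simp_all add: vector_3_eq_0_iff y_infinity_in_pline_iff
        affine_point_in_pline_iff\<close>)
  then show ?thesis
    by (simp add: affine_point_eq_iff)
qed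

lemma functional_relation_card_eq_graph:
  fixes T :: "('a::finite \<times> 'b) set"
  assumes card: "card T = CARD('a)"
    and functional: "\<And>a b b'. (a, b) \<in> T \<Longrightarrow> (a, b') \<in> T \<Longrightarrow> b = b'"
  shows "\<exists>g. T = range (\<lambda>a. (a, g a))"
proof -
  have "inj_on fst T"
    using functional by (intro inj_onI) (metis prod.collapse)
  then have "fst ` T = UNIV"
    using card by (simp add: card_image card_eq_UNIV_imp_eq_UNIV)
  then have "\<forall>a. \<exists>b. (a, b) \<in> T"
    by (metis UNIV_I fst_conv imageE prod.collapse)
  then obtain g where "\<forall>a. (a, g a) \<in> T"
    by (rule choice[THEN exE])
  then show ?thesis
    using functional by (intro exI[of _ g]) auto
qed

lemma graph_set_if_good_y_infinity:
  fixes S :: "('a::{field,finite} ^ 3) set set"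
  assumes S: "S \<subseteq> P2" and card: "card S = CARD('a) + 2"
    and good: "good_point S y_infinity" and x_inf: "x_infinity \<in> S"
  shows "\<exists>g. S = graph_set g"
proof -
  have fin: "finite S"
    using card card.infinite by fastforce
  have y_inf: "y_infinity \<in> S"
    using good unfolding good_point_def by blast
  define T where "T = {(a, b). affine_point a b \<in> S}"
  let ?h = "\<lambda>(a, b). affine_point a b :: ('a ^ 3) set"
  have S_eq: "S = ?h ` T \<union> {x_infinity, y_infinity}"
  proof (intro equalityI subsetI)
    fix X
    assume "X \<in> S"
    then show "X \<in> ?h ` T \<union> {x_infinity, y_infinity}"
      using affine_point_if_good_y_infinity[OF S fin good x_inf, of X] by (auto simp: T_def image_iff)
  qed (use x_inf y_inf in \<open>auto simp: T_def\<close>)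
  have "inj ?h"
    by (auto intro!: injI simp: affine_point_eq_iff)
  have "card S = card (?h ` T) + card {x_infinity, y_infinity :: ('a ^ 3) set}"
    by (subst S_eq, rule card_Un_disjoint) auto
  also have "\<dots> = card T + 2"
    using \<open>inj ?h\<close> by (simp add: card_image inj_on_subset)
  finally have card_T: "card T = CARD('a)"
    using card by simp
  obtain g where "T = range (\<lambda>a. (a, g a))"
    using functional_relation_card_eq_graph[OF card_T]
      vertical_unique_if_good_y_infinity[OF good fin] unfolding T_def by auto
  then have "?h ` T = range (\<lambda>c. affine_point c (g c))"
    by (simp add: image_image)
  then have "S = graph_set g"
    using S_eq by (simp add: graph_set_def)
  then show ?thesis
    by blast
qed

lemma inj_if_good_x_infinity:
  fixes g :: "'a::{field,finite} \<Rightarrow> 'a"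
  assumes good: "good_point (graph_set g) x_infinity"
  shows "inj g"
proof (rule injI)
  fix a a'
  assume eq: "g a = g a'"
  let ?l = "vector [0, 1, - g a] :: 'a ^ 3"
  have on_line: "affine_point c (g c) \<in> pline ?l \<inter> graph_set g" if "g c = g a" for c
    by (simp add: graph_set_def affine_point_in_pline_iff flip: that)
  have "affine_point a (g a) = affine_point a' (g a')"
    by (rule good_point_unique_on_line[OF good _ _ _ on_line on_line])
      (use eq in \<open>simp_all add: graph_set_def vector_3_eq_0_iff x_infinity_in_pline_iff\<close>)
  then show "a = a'"
    by (simp add: affine_point_eq_iff)
qed

lemma sum_mult_matrix_vector_mult:
  fixes A :: "'a::comm_semiring_1 ^ 'n ^ 'm"
  shows "(\<Sum>i\<in>UNIV. l $ i * (A *v v) $ i) = (\<Sum>j\<in>UNIV. (l v* A) $ j * v $ j)"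
  unfolding matrix_vector_mult_def vector_matrix_mult_def
  by (simp add: sum_distrib_left sum_distrib_right mult_ac sum.swap[of _ "UNIV :: 'm set"])

lemma vector_matrix_mult_eq_0_iff:
  assumes "invertible A"
  shows "l v* A = 0 \<longleftrightarrow> l = 0"
proof
  obtain A' where "A ** A' = mat 1"
    using assms unfolding invertible_def by blast
  then have "l = (l v* A) v* A'"
    by (simp add: vector_matrix_mul_assoc)
  then show "l v* A = 0 \<Longrightarrow> l = 0"
    by simp
qed simp

lemma inj_image_matrix_vector_mult:
  fixes A :: "'a::field ^ 'n ^ 'm"
  assumes "invertible A"
  shows "inj (\<lambda>Y. (*v) A ` Y)"
  using inj_matrix_vector_mult[OF assms] by (intro injI) (simp add: inj_image_eq_iff)

lemma image_in_pline_iff: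
  assumes A: "invertible A" and Y: "Y \<in> P2"
  shows "(*v) A ` Y \<in> pline l \<longleftrightarrow> Y \<in> pline (l v* A)"
proof -
  obtain v where v: "v \<noteq> 0" "Y = pclass v"
    using Y unfolding P2_def by blast
  moreover have "A *v v \<noteq> 0"
    using inj_matrix_vector_mult[OF A] v(1) by (metis injD matrix_vector_mult_0_right)
  ultimately show ?thesis
    by (simp add: image_pclass pclass_in_pline_iff sum_mult_matrix_vector_mult)
qed

lemma pmap_subset_P2:
  assumes A: "invertible A" and S: "S \<subseteq> P2"
  shows "pmap A S \<subseteq> P2"
proof
  fix Z
  assume "Z \<in> pmap A S"
  then obtain v where "v \<noteq> 0" "Z = pclass (A *v v)"
    using S unfolding pmap_def P2_def by (auto simp: image_pclass)
  moreover have "A *v v \<noteq> 0"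
    using inj_matrix_vector_mult[OF A] \<open>v \<noteq> 0\<close> by (metis injD matrix_vector_mult_0_right)
  ultimately show "Z \<in> P2"
    unfolding P2_def by blast
qed

lemma card_pmap: "invertible A \<Longrightarrow> card (pmap A S) = card S"
  unfolding pmap_def using inj_image_matrix_vector_mult by (metis card_image inj_on_subset subset_UNIV)

lemma good_point_pmap:
  assumes A: "invertible A" and S: "S \<subseteq> P2" and good: "good_point S X"
  shows "good_point (pmap A S) ((*v) A ` X)"
  unfolding good_point_def
proof (intro conjI allI impI)
  show "(*v) A ` X \<in> pmap A S"
    using good unfolding good_point_def pmap_def by blast
  fix L
  assume "is_line L \<and> (*v) A ` X \<in> L"
  then obtain l where l: "l \<noteq> 0" "L = pline l" "(*v) A ` X \<in> pline l"
    unfolding is_line_def by blast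
  have "L \<inter> pmap A S = (\<lambda>Y. (*v) A ` Y) ` (pline (l v* A) \<inter> S)"
    using S l(2) image_in_pline_iff[OF A] unfolding pmap_def by auto
  then have "card (L \<inter> pmap A S) = card (pline (l v* A) \<inter> S)"
    using inj_image_matrix_vector_mult[OF A] by (simp add: card_image inj_on_subset)
  moreover have "X \<in> pline (l v* A)"
    using l(3) good S image_in_pline_iff[OF A] unfolding good_point_def by blast
  then have "card (pline (l v* A) \<inter> S) < 3"
    using good l(1) vector_matrix_mult_eq_0_iff[OF A] unfolding good_point_def is_line_def by blast
  ultimately show "card (L \<inter> pmap A S) < 3"
    by simp
qed

definition column_matrix :: "'a::field ^ 3 \<Rightarrow> 'a ^ 3 \<Rightarrow> 'a ^ 3 \<Rightarrow> 'a ^ 3 ^ 3" where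
  "column_matrix u v w = (\<chi> i j. if j = 1 then u $ i else if j = 2 then v $ i else w $ i)"

lemma column_matrix_mult_basis:
  "column_matrix u v w *v vector [1, 0, 0] = u" "column_matrix u v w *v vector [0, 1, 0] = v"
  by (simp_all add: vec_eq_iff forall_3 column_matrix_def matrix_vector_mult_def sum_3)

lemma det_column_matrix:
  "det (column_matrix u v w) = w $ 1 * (u $ 2 * v $ 3 - u $ 3 * v $ 2)
    + w $ 2 * (u $ 3 * v $ 1 - u $ 1 * v $ 3) + w $ 3 * (u $ 1 * v $ 2 - u $ 2 * v $ 1)"
  by (simp add: det_3 column_matrix_def algebra_simps)

lemma ex_smult_if_minors_eq_0:
  fixes u v :: "'a::field ^ 3"
  assumes "v \<noteq> 0" "u $ 2 * v $ 3 = u $ 3 * v $ 2" "u $ 3 * v $ 1 = u $ 1 * v $ 3"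
    "u $ 1 * v $ 2 = u $ 2 * v $ 1"
  shows "\<exists>c. u = c *s v"
proof -
  obtain k where "v $ k \<noteq> 0"
    using assms(1) by (auto simp: vec_eq_iff)
  moreover have "k = 1 \<or> k = 2 \<or> k = 3"
    by (rule exhaust_3)
  ultimately have "u = (u $ k / v $ k) *s v"
    using assms(2-4) by (elim disjE) (auto simp: vec_eq_iff forall_3 field_simps)
  then show ?thesis ..
qed

lemma ex_invertible_column_matrix:
  fixes u v :: "'a::field ^ 3"
  assumes "v \<noteq> 0" "\<nexists>c. u = c *s v"
  shows "\<exists>w. invertible (column_matrix u v w)"
proof (rule ccontr)
  assume "\<nexists>w. invertible (column_matrix u v w)"
  then have "det (column_matrix u v w) = 0" for w
    by (simp add: invertible_det_nz)
  from this[of "vector [1, 0, 0]"] this[of "vector [0, 1, 0]"] this[of "vector [0, 0, 1]"]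
  have "\<exists>c. u = c *s v"
    by (intro ex_smult_if_minors_eq_0[OF assms(1)]) (simp_all add: det_column_matrix)
  with assms(2) show False ..
qed

lemma ex_invertible_to_infinity:
  assumes P: "P \<in> P2" and Q: "Q \<in> P2" and "P \<noteq> Q"
  shows "\<exists>A. invertible A \<and> (*v) A ` P = y_infinity \<and> (*v) A ` Q = x_infinity"
proof -
  obtain p q where pq: "p \<noteq> 0" "P = pclass p" "q \<noteq> 0" "Q = pclass q"
    using P Q unfolding P2_def by blast
  have "\<nexists>c. q = c *s p"
  proof
    assume "\<exists>c. q = c *s p"
    then obtain c where "q = c *s p" ..
    with pq \<open>P \<noteq> Q\<close> show False
      by (cases "c = 0") (auto simp: pclass_smult)
  qed
  then obtain w where "invertible (column_matrix q p w)"
    using ex_invertible_column_matrix[OF pq(1)] by blast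
  then obtain A where A: "A ** column_matrix q p w = mat 1" "invertible A"
    unfolding invertible_def by blast
  have "A *v p = vector [0, 1, 0]" "A *v q = vector [1, 0, 0]"
    using column_matrix_mult_basis[of q p w] A(1) by (metis matrix_vector_mul_assoc matrix_vector_mul_lid)+
  with A(2) show ?thesis
    using pq by (auto simp: image_pclass x_infinity_def y_infinity_def)
qed

lemma normal_form_graph_set:
  fixes S :: "('a::{field,finite} ^ 3) set set"
  assumes S: "S \<subseteq> P2" and card: "card S = CARD('a) + 2"
    and good: "good_point S P" and Q: "Q \<in> S" and "P \<noteq> Q"
  shows "\<exists>A g. invertible A \<and> pmap A S = graph_set g \<and> (good_point S Q \<longrightarrow> inj g)"
proof -
  have "P \<in> S"
    using good unfolding good_point_def by blast
  then obtain A where A: "invertible A" "(*v) A ` P = y_infinity" "(*v) A ` Q = x_infinity"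
    using ex_invertible_to_infinity S Q \<open>P \<noteq> Q\<close> by blast
  have "good_point (pmap A S) y_infinity"
    using good_point_pmap[OF A(1) S good] A(2) by simp
  moreover have "x_infinity \<in> pmap A S"
    using Q A(3) unfolding pmap_def by blast
  ultimately obtain g where g: "pmap A S = graph_set g"
    using graph_set_if_good_y_infinity pmap_subset_P2[OF A(1) S] card card_pmap[OF A(1)] by metis
  have "inj g" if "good_point S Q"
    using good_point_pmap[OF A(1) S that] A(3) g inj_if_good_x_infinity by metis
  with A(1) g show ?thesis
    by blast
qed

theorem lemma2p1:
  fixes S :: "('a::{field,finite} ^ 3) set set"
  assumes "S \<subseteq> P2"
    and "card S = CARD('a) + 2"
  shows "((\<exists>P. good_point S P) \<longrightarrow>
            (\<exists>A f. invertible A \<and> pmap A S = S_f f))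
       \<and> ((\<exists>P Q. P \<noteq> Q \<and> good_point S P \<and> good_point S Q) \<longrightarrow>
            (\<exists>A f. invertible A \<and> pmap A S = S_f f \<and> bij (poly f)))"
proof (intro conjI impI)
  assume "\<exists>P. good_point S P"
  then obtain P where good: "good_point S P" ..
  have "\<not> S \<subseteq> {P}"
    using assms(2) card_mono[of "{P}" S] by auto
  then obtain Q where "Q \<in> S" "P \<noteq> Q"
    by blast
  then obtain A g where "invertible A" "pmap A S = graph_set g"
    using normal_form_graph_set[OF assms good] by blast
  moreover obtain f where "poly f = g"
    using ex_poly_eq_fun by blast
  ultimately show "\<exists>A f. invertible A \<and> pmap A S = S_f f"
    by (auto simp: S_f_eq_graph_set)
next
  assume "\<exists>P Q. P \<noteq> Q \<and> good_point S P \<and> good_point S Q"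
  then obtain P Q where "P \<noteq> Q" "good_point S P" "good_point S Q"
    by blast
  then obtain A g where "invertible A" "pmap A S = graph_set g" "inj g"
    using normal_form_graph_set[OF assms] good_point_def by blast
  moreover obtain f where "poly f = g"
    using ex_poly_eq_fun by blast
  ultimately have "invertible A" "pmap A S = S_f f" "bij (poly f)"
    by (simp_all add: S_f_eq_graph_set bij_def finite_UNIV_inj_surj)
  then show "\<exists>A f. invertible A \<and> pmap A S = S_f f \<and> bij (poly f)"
    by blast
qed

end
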